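(* If $\mathcal C\subseteq 2^{[n]}$ is inductively pierced, then $\mathcal C$ is degree two, i.e. every element of $\mathrm{CF}(J_\mathcal C)$ has degree two.
   Context: A code is a set $\mathcal C\subseteq 2^{[n]}$, $[n]=\{1,\dots,n\}$, elements of $[n]$ being neurons. Standing conventions: $\emptyset\in\mathcal C$; every neuron lies in some codeword; no two distinct neurons lie in exactly the same codewords. For $i\in[n]$, $\mathcal C\setminus i$ is obtained by removing $i$ from every codeword. For $\sigma\subseteq\tau$, $[\sigma,\tau]=\{\gamma:\sigma\subseteq\gamma\subseteq\tau\}$, of rank $|\tau\setminus\sigma|$. A neuron $i$ is a $k$-piercing of $\mathcal C$ if there are $\sigma\subseteq\tau\subseteq[n]\setminus\{i\}$ with $[\sigma,\tau]$ of rank $k$, $[\sigma,\tau]\subseteq\mathcal C\setminus i$, and $\mathcal C=(\mathcal C\setminus i)\cup[\sigma\cup\{i\},\tau\cup\{i\}]$. A code is $k$-inductively pierced if $\mathcal C=\{\emptyset\}$, or some neuron $i$ is a $k'$-piercing for some $k'\le k$ and $\mathcal C\setminus i$ is $k$-inductively pierced; inductively pierced means $k$-inductively pierced for some $k$. A pseudo-monomial in $\mathbb F_2[x_1,\dots,x_n]$ is $\prod_{i\in\sigma}x_i\prod_{j\in\tau}(1-x_j)$ with $\sigma\cap\tau=\emptyset$, ordered by divisibility. $J_\mathcal C=\langle\rho_\sigma:\sigma\notin\mathcal C\rangle$ with $\rho_\sigma=\prod_{i\in\sigma}x_i\prod_{j\notin\sigma}(1-x_j)$, and $\mathrm{CF}(J_\mathcal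 C)$ is the set of minimal pseudo-monomials in $J_\mathcal C$. *)

theory Defs
  imports "HOL-Library.Poly_Mapping" "HOL-Library.Z2"
begin

definition is_code :: "nat \<Rightarrow> nat set set \<Rightarrow> bool" where
  "is_code n C \<longleftrightarrow> (\<forall>c\<in>C. c \<subseteq> {1..n}) \<and> {} \<in> C
     \<and> (\<forall>i\<in>{1..n}. \<exists>c\<in>C. i \<in> c)
     \<and> (\<forall>i\<in>{1..n}. \<forall>j\<in>{1..n}. i \<noteq> j \<longrightarrow> {c\<in>C. i \<in> c} \<noteq> {c\<in>C. j \<in> c})"

definition del_neuron :: "nat set set \<Rightarrow> nat \<Rightarrow> nat set set" where
  "del_neuron C i = (\<lambda>c. c - {i}) ` C"

definition interval :: "nat set \<Rightarrow> nat set \<Rightarrow> nat set set" where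
  "interval \<sigma> \<tau> = {\<gamma>. \<sigma> \<subseteq> \<gamma> \<and> \<gamma> \<subseteq> \<tau>}"

definition piercing :: "nat \<Rightarrow> nat set set \<Rightarrow> nat \<Rightarrow> nat \<Rightarrow> bool" where
  "piercing n C i k \<longleftrightarrow> i \<in> {1..n} \<and>
     (\<exists>\<sigma> \<tau>. \<sigma> \<subseteq> \<tau> \<and> \<tau> \<subseteq> {1..n} - {i} \<and> card (\<tau> - \<sigma>) = k
        \<and> interval \<sigma> \<tau> \<subseteq> del_neuron C i
        \<and> C = del_neuron C i \<union> interval (\<sigma> \<union> {i}) (\<tau> \<union> {i}))"

inductive k_ind_pierced :: "nat \<Rightarrow> nat \<Rightarrow> nat set set \<Rightarrow> bool" for n k where
  base: "k_ind_pierced n k {{}}"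
| step: "piercing n C i k' \<Longrightarrow> k' \<le> k \<Longrightarrow> k_ind_pierced n k (del_neuron C i)
          \<Longrightarrow> k_ind_pierced n k C"

definition ind_pierced :: "nat \<Rightarrow> nat set set \<Rightarrow> bool" where
  "ind_pierced n C \<longleftrightarrow> (\<exists>k. k_ind_pierced n k C)"

type_synonym f2poly = "(nat \<Rightarrow>\<^sub>0 nat) \<Rightarrow>\<^sub>0 bit"

text \<open>Membership in F_2[x_1,...,x_n] (inside the polynomial ring in countably many variables).\<close>
definition poly_in :: "nat \<Rightarrow> f2poly \<Rightarrow> bool" where
  "poly_in n p \<longleftrightarrow> (\<forall>m\<in>Poly_Mapping.keys p. Poly_Mapping.keys m \<subseteq> {1..n})"

definition var :: "nat \<Rightarrow> f2poly" where
  "var i = Poly_Mapping.single (Poly_Mapping.single i 1) 1"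

definition tdeg :: "f2poly \<Rightarrow> nat" where
  "tdeg p = Max ((\<lambda>m. sum (Poly_Mapping.lookup m) (Poly_Mapping.keys m)) ` Poly_Mapping.keys p)"

definition ideal_gen :: "nat \<Rightarrow> f2poly set \<Rightarrow> f2poly set" where
  "ideal_gen n G = {(\<Sum>g\<in>F. r g * g) | F r. finite F \<and> F \<subseteq> G \<and> (\<forall>g\<in>F. poly_in n (r g))}"

definition pdvd :: "nat \<Rightarrow> f2poly \<Rightarrow> f2poly \<Rightarrow> bool" where
  "pdvd n g f \<longleftrightarrow> (\<exists>q. poly_in n q \<and> f = g * q)"

definition pm :: "nat set \<Rightarrow> nat set \<Rightarrow> f2poly" where
  "pm \<sigma> \<tau> = (\<Prod>i\<in>\<sigma>. var i) * (\<Prod>j\<in>\<tau>. 1 - var j)"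

definition is_pseudo_monomial :: "nat \<Rightarrow> f2poly \<Rightarrow> bool" where
  "is_pseudo_monomial n f \<longleftrightarrow> (\<exists>\<sigma> \<tau>. \<sigma> \<subseteq> {1..n} \<and> \<tau> \<subseteq> {1..n} \<and> \<sigma> \<inter> \<tau> = {} \<and> f = pm \<sigma> \<tau>)"

definition rho :: "nat \<Rightarrow> nat set \<Rightarrow> f2poly" where
  "rho n \<sigma> = pm \<sigma> ({1..n} - \<sigma>)"

definition neural_ideal :: "nat \<Rightarrow> nat set set \<Rightarrow> f2poly set" where
  "neural_ideal n C = ideal_gen n {rho n \<sigma> | \<sigma>. \<sigma> \<subseteq> {1..n} \<and> \<sigma> \<notin> C}"

definition canonical_form :: "nat \<Rightarrow> nat set set \<Rightarrow> f2poly set" where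
  "canonical_form n C = {f. is_pseudo_monomial n f \<and> f \<in> neural_ideal n C
     \<and> (\<forall>g. is_pseudo_monomial n g \<and> g \<in> neural_ideal n C \<and> pdvd n g f \<longrightarrow> g = f)}"

end

theory Submission
  imports Defs
begin

text \<open>
  Evaluating at the characteristic vector of a set \<open>c\<close> turns the pseudo-monomial
  \<open>x\<^sub>\<sigma> (1 - x)\<^sub>\<tau>\<close> into the indicator of the box \<open>{c. \<sigma> \<subseteq> c, c \<inter> \<tau> = {}}\<close>. Hence it lies
  in \<open>J\<^sub>C\<close> iff no codeword lies in that box, and \<open>CF(J\<^sub>C)\<close> consists of the pseudo-monomials
  of the minimal such pairs \<open>(\<sigma>, \<tau>)\<close>, of degree \<open>|\<sigma>| + |\<tau>|\<close>. Since \<open>{} \<in> C\<close> and every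
  neuron fires, this degree is at least two. For the upper bound, induct along the piercing
  sequence: the codewords containing the last neuron \<open>i\<close> form an interval
  \<open>[\<sigma>\<^sub>0 \<union> {i}, \<tau>\<^sub>0 \<union> {i}]\<close> whose copy without \<open>i\<close> is already in the code. If \<open>i \<in> \<sigma>\<close>,
  minimality forces \<open>(\<sigma>, \<tau>) = ({i, a}, {})\<close> or \<open>({i}, {b})\<close>; \<open>i \<in> \<tau>\<close> is impossible because
  removing \<open>i\<close> from a codeword gives a codeword; otherwise \<open>(\<sigma>, \<tau>)\<close> stays minimal after
  deleting \<open>i\<close>.
\<close>

section \<open>Evaluation at 0/1-points\<close>

text \<open>Evaluation at the 0/1-point with support \<open>c\<close>: a monomial takes the value 1 there iff all
  its variables lie in \<open>c\<close>.\<close>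
definition eval_at :: "'a set \<Rightarrow> (('a \<Rightarrow>\<^sub>0 nat) \<Rightarrow>\<^sub>0 'b::comm_semiring_1) \<Rightarrow> 'b" where
  "eval_at c p = (\<Sum>m\<in>Poly_Mapping.keys p. if Poly_Mapping.keys m \<subseteq> c then Poly_Mapping.lookup p m else 0)"

lemma eval_at_single [simp]:
  "eval_at c (Poly_Mapping.single m v) = (if Poly_Mapping.keys m \<subseteq> c then v else 0)"
  by (simp add: eval_at_def)

lemma eval_at_zero [simp]: "eval_at c 0 = 0"
  by (simp add: eval_at_def)

lemma eval_at_one [simp]: "eval_at c 1 = 1"
  by (simp add: eval_at_def)

lemma eval_at_add: "eval_at c (p + q) = eval_at c p + eval_at c q"
  unfolding eval_at_def by (rule setsum_keys_plus_distrib) auto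

lemma eval_at_sum: "eval_at c (\<Sum>i\<in>I. f i) = (\<Sum>i\<in>I. eval_at c (f i))"
  by (induction I rule: infinite_finite_induct) (auto simp: eval_at_add)

lemma poly_mapping_eq_sum_single:
  "p = (\<Sum>m\<in>Poly_Mapping.keys p. Poly_Mapping.single m (Poly_Mapping.lookup p m))"
  by (rule poly_mapping_eqI) (simp add: lookup_sum lookup_single when_def in_keys_iff)

lemma keys_add_canonical:
  fixes f g :: "'a \<Rightarrow>\<^sub>0 'b::canonically_ordered_monoid_add"
  shows "Poly_Mapping.keys (f + g) = Poly_Mapping.keys f \<union> Poly_Mapping.keys g"
  by (auto simp: in_keys_iff lookup_add)

lemma eval_at_mult: "eval_at c (p * q) = eval_at c p * eval_at c q"
proof -
  let ?p = "\<lambda>a. Poly_Mapping.single a (Poly_Mapping.lookup p a)"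
  let ?q = "\<lambda>b. Poly_Mapping.single b (Poly_Mapping.lookup q b)"
  have single: "eval_at c (?p a * ?q b) = eval_at c (?p a) * eval_at c (?q b)" for a b
    by (simp add: mult_single keys_add_canonical)
  have "eval_at c (p * q) = eval_at c ((\<Sum>a\<in>Poly_Mapping.keys p. ?p a) * (\<Sum>b\<in>Poly_Mapping.keys q. ?q b))"
    by (simp only: poly_mapping_eq_sum_single [symmetric])
  also have "\<dots> = (\<Sum>a\<in>Poly_Mapping.keys p. eval_at c (?p a)) * (\<Sum>b\<in>Poly_Mapping.keys q. eval_at c (?q b))"
    by (simp only: sum_product eval_at_sum single)
  also have "\<dots> = eval_at c p * eval_at c q"
    by (simp only: eval_at_sum [symmetric] poly_mapping_eq_sum_single [symmetric])
  finally show ?thesis .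
qed

lemma eval_at_prod: "eval_at c (\<Prod>i\<in>I. f i) = (\<Prod>i\<in>I. eval_at c (f i))"
  by (induction I rule: infinite_finite_induct) (auto simp: eval_at_mult)

lemma eval_at_var [simp]: "eval_at c (var i) = (if i \<in> c then 1 else 0)"
  by (simp add: var_def)

lemma eval_at_one_minus_var [simp]: "eval_at c (1 - var i) = (if i \<in> c then 0 else 1)"
proof -
  have "eval_at c (1 - var i) + eval_at c (var i) = 1"
    by (simp only: eval_at_add [symmetric] diff_add_cancel eval_at_one)
  then show ?thesis
    by (auto simp: eq_diff_eq [symmetric] split: if_splits)
qed

lemma eval_at_pm:
  "finite \<sigma> \<Longrightarrow> finite \<tau> \<Longrightarrow> eval_at c (pm \<sigma> \<tau>) = (if \<sigma> \<subseteq> c \<and> c \<inter> \<tau> = {} then 1 else 0)"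
  by (auto simp: pm_def eval_at_mult eval_at_prod prod_zero_iff)

section \<open>Expansion and degree of pseudo-monomials\<close>

definition monomial_of_set :: "'a set \<Rightarrow> ('a \<Rightarrow>\<^sub>0 nat)" where
  "monomial_of_set S = (\<Sum>i\<in>S. Poly_Mapping.single i 1)"

lemma lookup_monomial_of_set:
  "finite S \<Longrightarrow> Poly_Mapping.lookup (monomial_of_set S) i = (if i \<in> S then 1 else 0)"
  by (simp add: monomial_of_set_def lookup_sum lookup_single when_def)

lemma keys_monomial_of_set [simp]: "finite S \<Longrightarrow> Poly_Mapping.keys (monomial_of_set S) = S"
  by (auto simp: in_keys_iff lookup_monomial_of_set split: if_splits)

lemma degree_monomial_of_set:
  "finite S \<Longrightarrow> sum (Poly_Mapping.lookup (monomial_of_set S)) (Poly_Mapping.keys (monomial_of_set S)) = card S"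
  by (simp add: lookup_monomial_of_set)

lemma prod_var_eq_single:
  "finite \<sigma> \<Longrightarrow> (\<Prod>i\<in>\<sigma>. var i) = Poly_Mapping.single (monomial_of_set \<sigma>) 1"
  by (induction \<sigma> rule: finite_induct) (simp_all add: monomial_of_set_def var_def mult_single)

lemma keys_sum_single:
  assumes "finite M" "v \<noteq> 0"
  shows "Poly_Mapping.keys (\<Sum>m\<in>M. Poly_Mapping.single m v) = M"
proof -
  have "Poly_Mapping.lookup (\<Sum>m\<in>M. Poly_Mapping.single m v) k = (if k \<in> M then v else 0)" for k
    using assms(1) by (simp add: lookup_sum lookup_single when_def)
  then show ?thesis
    using assms(2) by (auto simp: in_keys_iff split: if_splits)
qed

lemma pm_union:
  assumes "finite \<sigma>" "finite \<sigma>'" "finite \<tau>" "finite \<tau>'" "\<sigma> \<inter> \<sigma>' = {}" "\<tau> \<inter> \<tau>' = {}"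
  shows "pm (\<sigma> \<union> \<sigma>') (\<tau> \<union> \<tau>') = pm \<sigma> \<tau> * pm \<sigma>' \<tau>'"
  using assms by (simp add: pm_def prod.union_disjoint ac_simps)

lemma one_minus_var_eq: "1 - var j = var j + 1"
proof -
  have "- var j = var j"
    by (rule poly_mapping_eqI) simp
  then show ?thesis
    by (metis add.commute diff_conv_add_uminus)
qed

lemma pm_eq_sum_single:
  assumes "finite \<sigma>" "finite \<tau>" "\<sigma> \<inter> \<tau> = {}"
  shows "pm \<sigma> \<tau> = (\<Sum>m\<in>(\<lambda>A. monomial_of_set (\<sigma> \<union> A)) ` Pow \<tau>. Poly_Mapping.single m 1)"
proof -
  have inj: "inj_on (\<lambda>A. monomial_of_set (\<sigma> \<union> A)) (Pow \<tau>)"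
  proof (rule inj_onI)
    fix A B assume "A \<in> Pow \<tau>" "B \<in> Pow \<tau>" "monomial_of_set (\<sigma> \<union> A) = monomial_of_set (\<sigma> \<union> B)"
    then have "\<sigma> \<union> A = \<sigma> \<union> B"
      using assms by (metis PowD finite_Un finite_subset keys_monomial_of_set)
    then show "A = B"
      using assms(3) \<open>A \<in> Pow \<tau>\<close> \<open>B \<in> Pow \<tau>\<close> by blast
  qed
  have "(\<Prod>j\<in>\<tau>. 1 - var j) = (\<Sum>A\<in>Pow \<tau>. (\<Prod>j\<in>A. var j))"
    using assms(2) by (simp add: one_minus_var_eq prod_add)
  then have "pm \<sigma> \<tau> = (\<Sum>A\<in>Pow \<tau>. (\<Prod>i\<in>\<sigma> \<union> A. var i))"
    using assms by (auto simp: pm_def sum_distrib_left intro!: sum.cong prod.union_disjoint [symmetric]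
        dest: finite_subset)
  also have "\<dots> = (\<Sum>A\<in>Pow \<tau>. Poly_Mapping.single (monomial_of_set (\<sigma> \<union> A)) 1)"
    using assms by (auto intro!: sum.cong prod_var_eq_single dest: finite_subset)
  also have "\<dots> = (\<Sum>m\<in>(\<lambda>A. monomial_of_set (\<sigma> \<union> A)) ` Pow \<tau>. Poly_Mapping.single m 1)"
    by (simp add: sum.reindex [OF inj])
  finally show ?thesis .
qed

lemma keys_pm:
  "finite \<sigma> \<Longrightarrow> finite \<tau> \<Longrightarrow> \<sigma> \<inter> \<tau> = {} \<Longrightarrow>
    Poly_Mapping.keys (pm \<sigma> \<tau>) = (\<lambda>A. monomial_of_set (\<sigma> \<union> A)) ` Pow \<tau>"
  by (simp add: pm_eq_sum_single keys_sum_single)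

lemma tdeg_pm:
  assumes "finite \<sigma>" "finite \<tau>" "\<sigma> \<inter> \<tau> = {}"
  shows "tdeg (pm \<sigma> \<tau>) = card \<sigma> + card \<tau>"
proof -
  have "sum (Poly_Mapping.lookup (monomial_of_set (\<sigma> \<union> A))) (Poly_Mapping.keys (monomial_of_set (\<sigma> \<union> A)))
      = card \<sigma> + card A" if "A \<subseteq> \<tau>" for A
  proof -
    have "finite A" "\<sigma> \<inter> A = {}"
      using that assms finite_subset by blast+
    then show ?thesis
      using assms(1) degree_monomial_of_set [of "\<sigma> \<union> A"] by (simp add: card_Un_disjoint)
  qed
  then have "(\<lambda>m. sum (Poly_Mapping.lookup m) (Poly_Mapping.keys m)) ` Poly_Mapping.keys (pm \<sigma> \<tau>)
      = (\<lambda>A. card \<sigma> + card A) ` Pow \<tau>"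
    using assms by (simp add: keys_pm image_image)
  moreover have "Max ((\<lambda>A. card \<sigma> + card A) ` Pow \<tau>) = card \<sigma> + card \<tau>"
    using assms(2) by (auto intro!: Max_eqI card_mono)
  ultimately show ?thesis
    by (simp add: tdeg_def)
qed

lemma poly_in_pm:
  assumes "\<sigma> \<subseteq> {1..n}" "\<tau> \<subseteq> {1..n}" "\<sigma> \<inter> \<tau> = {}"
  shows "poly_in n (pm \<sigma> \<tau>)"
proof -
  have "finite \<sigma>" "finite \<tau>"
    using assms finite_subset by blast+
  moreover have "finite (\<sigma> \<union> A)" if "A \<subseteq> \<tau>" for A
    using that \<open>finite \<sigma>\<close> \<open>finite \<tau>\<close> finite_subset by blast
  ultimately show ?thesis
    using assms by (auto simp: poly_in_def keys_pm)
qed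

lemma pm_inject:
  assumes "finite \<sigma>" "finite \<tau>" "finite \<sigma>'" "finite \<tau>'" "\<sigma> \<inter> \<tau> = {}" "\<sigma>' \<inter> \<tau>' = {}"
    and "pm \<sigma> \<tau> = pm \<sigma>' \<tau>'"
  shows "\<sigma> = \<sigma>' \<and> \<tau> = \<tau>'"
proof -
  have box: "\<sigma> \<subseteq> c \<and> c \<inter> \<tau> = {} \<longleftrightarrow> \<sigma>' \<subseteq> c \<and> c \<inter> \<tau>' = {}" for c
    using arg_cong [OF assms(7), of "eval_at c"] assms(1-4) by (auto simp: eval_at_pm split: if_splits)
  from box [of \<sigma>] box [of \<sigma>'] have "\<sigma> = \<sigma>'" "\<sigma> \<inter> \<tau>' = {}" "\<sigma>' \<inter> \<tau> = {}"
    using assms(5,6) by blast+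
  moreover have "\<tau> = \<tau>'"
    using box [of "insert b \<sigma>" for b] \<open>\<sigma> = \<sigma>'\<close> assms(5,6) by blast
  ultimately show ?thesis by blast
qed

section \<open>Pseudo-monomials in the neural ideal\<close>

lemma pm_eq_sum_interval:
  assumes "finite \<rho>" "finite \<tau>" "\<sigma> \<subseteq> \<rho>" "\<rho> \<inter> \<tau> = {}"
  shows "pm \<sigma> \<tau> = (\<Sum>\<gamma>\<in>interval \<sigma> \<rho>. pm \<gamma> (\<tau> \<union> (\<rho> - \<gamma>)))"
proof -
  define U where "U = \<rho> - \<sigma>"
  have fin: "finite \<sigma>" "finite U"
    using assms finite_subset by (auto simp: U_def)
  have "(\<Sum>A\<in>Pow U. pm A (U - A)) = (\<Prod>u\<in>U. var u + (1 - var u))"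
    unfolding pm_def using fin(2) by (rule prod_add [symmetric])
  also have "\<dots> = 1"
    by simp
  finally have "pm \<sigma> \<tau> = (\<Sum>A\<in>Pow U. pm \<sigma> \<tau> * pm A (U - A))"
    by (simp add: sum_distrib_left [symmetric])
  also have "\<dots> = (\<Sum>A\<in>Pow U. pm (\<sigma> \<union> A) (\<tau> \<union> (\<rho> - (\<sigma> \<union> A))))"
  proof (rule sum.cong [OF refl])
    fix A assume "A \<in> Pow U"
    then have "finite A"
      using fin(2) finite_subset by blast
    moreover have "\<sigma> \<inter> A = {}" "\<tau> \<inter> (U - A) = {}" "U - A = \<rho> - (\<sigma> \<union> A)"
      using \<open>A \<in> Pow U\<close> assms(4) by (auto simp: U_def)
    ultimately show "pm \<sigma> \<tau> * pm A (U - A) = pm (\<sigma> \<union> A) (\<tau> \<union> (\<rho> - (\<sigma> \<union> A)))"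
      using fin assms(1,2) pm_union [of \<sigma> A \<tau> "U - A"] by simp
  qed
  also have "\<dots> = (\<Sum>\<gamma>\<in>(\<lambda>A. \<sigma> \<union> A) ` Pow U. pm \<gamma> (\<tau> \<union> (\<rho> - \<gamma>)))"
    by (rule sum.reindex [symmetric, unfolded comp_def]) (auto simp: U_def inj_on_def)
  also have "(\<lambda>A. \<sigma> \<union> A) ` Pow U = interval \<sigma> \<rho>"
  proof
    show "(\<lambda>A. \<sigma> \<union> A) ` Pow U \<subseteq> interval \<sigma> \<rho>"
      using assms(3) by (auto simp: U_def interval_def)
    show "interval \<sigma> \<rho> \<subseteq> (\<lambda>A. \<sigma> \<union> A) ` Pow U"
    proof
      fix \<gamma> assume "\<gamma> \<in> interval \<sigma> \<rho>"
      then have "\<gamma> = \<sigma> \<union> (\<gamma> - \<sigma>)" "\<gamma> - \<sigma> \<in> Pow U"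
        by (auto simp: interval_def U_def)
      then show "\<gamma> \<in> (\<lambda>A. \<sigma> \<union> A) ` Pow U"
        by blast
    qed
  qed
  finally show ?thesis .
qed

lemma eval_at_rho:
  "c \<subseteq> {1..n} \<Longrightarrow> \<gamma> \<subseteq> {1..n} \<Longrightarrow> eval_at c (rho n \<gamma>) = (if \<gamma> = c then 1 else 0)"
  by (subst rho_def, subst eval_at_pm) (auto intro: finite_subset)

lemma inj_on_rho: "inj_on (rho n) (Pow {1..n})"
proof (rule inj_onI)
  fix \<gamma> \<gamma>' assume \<gamma>: "\<gamma> \<in> Pow {1..n}" and \<gamma>': "\<gamma>' \<in> Pow {1..n}" and eq: "rho n \<gamma> = rho n \<gamma>'"
  have "eval_at \<gamma> (rho n \<gamma>) = 1"
    using \<gamma> by (simp add: eval_at_rho)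
  then have "eval_at \<gamma> (rho n \<gamma>') = 1"
    by (simp only: eq)
  then show "\<gamma> = \<gamma>'"
    using \<gamma> \<gamma>' by (simp add: eval_at_rho split: if_splits)
qed

lemma sum_in_ideal_gen: "finite F \<Longrightarrow> F \<subseteq> G \<Longrightarrow> (\<Sum>g\<in>F. g) \<in> ideal_gen n G"
  unfolding ideal_gen_def by (rule CollectI, rule exI [of _ F], rule exI [of _ "\<lambda>_. 1"]) (simp add: poly_in_def)

lemma eval_at_neural_ideal:
  assumes "f \<in> neural_ideal n C" "c \<in> C" "c \<subseteq> {1..n}"
  shows "eval_at c f = 0"
proof -
  obtain F r where f: "f = (\<Sum>g\<in>F. r g * g)" and F: "F \<subseteq> {rho n \<gamma> | \<gamma>. \<gamma> \<subseteq> {1..n} \<and> \<gamma> \<notin> C}"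
    using assms(1) unfolding neural_ideal_def ideal_gen_def by blast
  have "eval_at c g = 0" if "g \<in> F" for g
    using F that assms(2,3) by (auto simp: eval_at_rho)
  then show ?thesis
    by (simp add: f eval_at_sum eval_at_mult)
qed

text \<open>The receptive-field relationship \<open>U\<^sub>\<sigma> \<subseteq> \<Union>\<^sub>j\<^sub>\<in>\<^sub>\<tau> U\<^sub>j\<close> of the literature, read off the code.\<close>

definition rf_relation :: "nat set set \<Rightarrow> nat set \<Rightarrow> nat set \<Rightarrow> bool" where
  "rf_relation C \<sigma> \<tau> \<longleftrightarrow> (\<forall>c\<in>C. \<not> (\<sigma> \<subseteq> c \<and> c \<inter> \<tau> = {}))"

definition minimal_rf_relation :: "nat set set \<Rightarrow> nat set \<Rightarrow> nat set \<Rightarrow> bool" where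
  "minimal_rf_relation C \<sigma> \<tau> \<longleftrightarrow> rf_relation C \<sigma> \<tau> \<and>
     (\<forall>\<sigma>'\<subseteq>\<sigma>. \<forall>\<tau>'\<subseteq>\<tau>. rf_relation C \<sigma>' \<tau>' \<longrightarrow> \<sigma>' = \<sigma> \<and> \<tau>' = \<tau>)"

lemma minimal_rf_relationD:
  assumes "minimal_rf_relation C \<sigma> \<tau>"
  shows "rf_relation C \<sigma> \<tau>"
    and "\<sigma>' \<subseteq> \<sigma> \<Longrightarrow> \<tau>' \<subseteq> \<tau> \<Longrightarrow> rf_relation C \<sigma>' \<tau>' \<Longrightarrow> \<sigma>' = \<sigma> \<and> \<tau>' = \<tau>"
  using assms unfolding minimal_rf_relation_def by blast+

lemma pm_in_neural_ideal_iff: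
  assumes "\<forall>c\<in>C. c \<subseteq> {1..n}" "\<sigma> \<subseteq> {1..n}" "\<tau> \<subseteq> {1..n}" "\<sigma> \<inter> \<tau> = {}"
  shows "pm \<sigma> \<tau> \<in> neural_ideal n C \<longleftrightarrow> rf_relation C \<sigma> \<tau>"
proof
  have fin: "finite \<sigma>" "finite \<tau>"
    using assms finite_subset by blast+
  show "rf_relation C \<sigma> \<tau>" if J: "pm \<sigma> \<tau> \<in> neural_ideal n C"
    unfolding rf_relation_def
  proof (intro ballI notI)
    fix c assume "c \<in> C" "\<sigma> \<subseteq> c \<and> c \<inter> \<tau> = {}"
    then have "eval_at c (pm \<sigma> \<tau>) = 1"
      using fin by (simp add: eval_at_pm)
    moreover have "eval_at c (pm \<sigma> \<tau>) = 0"
      using eval_at_neural_ideal [OF J \<open>c \<in> C\<close>] assms(1) \<open>c \<in> C\<close> by blast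
    ultimately show False
      by simp
  qed
  assume rf: "rf_relation C \<sigma> \<tau>"
  let ?I = "interval \<sigma> ({1..n} - \<tau>)"
  have "pm \<sigma> \<tau> = (\<Sum>\<gamma>\<in>?I. pm \<gamma> (\<tau> \<union> ({1..n} - \<tau> - \<gamma>)))"
    using assms fin by (intro pm_eq_sum_interval) auto
  also have "\<dots> = (\<Sum>\<gamma>\<in>?I. rho n \<gamma>)"
  proof (rule sum.cong [OF refl])
    fix \<gamma> assume "\<gamma> \<in> ?I"
    then have "\<tau> \<union> ({1..n} - \<tau> - \<gamma>) = {1..n} - \<gamma>"
      using assms(3) by (auto simp: interval_def)
    then show "pm \<gamma> (\<tau> \<union> ({1..n} - \<tau> - \<gamma>)) = rho n \<gamma>"
      by (simp add: rho_def)
  qed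
  also have "\<dots> = (\<Sum>g\<in>rho n ` ?I. g)"
    by (rule sum.reindex [symmetric, unfolded comp_def])
      (rule inj_on_subset [OF inj_on_rho], auto simp: interval_def)
  also have "\<dots> \<in> neural_ideal n C"
    unfolding neural_ideal_def
  proof (rule sum_in_ideal_gen)
    show "finite (rho n ` ?I)"
      by (simp add: interval_def)
    show "rho n ` ?I \<subseteq> {rho n \<gamma> | \<gamma>. \<gamma> \<subseteq> {1..n} \<and> \<gamma> \<notin> C}"
      using rf by (auto simp: interval_def rf_relation_def)
  qed
  finally show "pm \<sigma> \<tau> \<in> neural_ideal n C" .
qed

lemma canonical_form_minimal_rf_relation:
  assumes "f \<in> canonical_form n C" "\<forall>c\<in>C. c \<subseteq> {1..n}"
  obtains \<sigma> \<tau> where "\<sigma> \<subseteq> {1..n}" "\<tau> \<subseteq> {1..n}" "\<sigma> \<inter> \<tau> = {}" "f = pm \<sigma> \<tau>"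
    "minimal_rf_relation C \<sigma> \<tau>"
proof -
  obtain \<sigma> \<tau> where st: "\<sigma> \<subseteq> {1..n}" "\<tau> \<subseteq> {1..n}" "\<sigma> \<inter> \<tau> = {}" "f = pm \<sigma> \<tau>"
    using assms(1) unfolding canonical_form_def is_pseudo_monomial_def by blast
  have fJ: "f \<in> neural_ideal n C"
    and fmin: "\<And>g. is_pseudo_monomial n g \<Longrightarrow> g \<in> neural_ideal n C \<Longrightarrow> pdvd n g f \<Longrightarrow> g = f"
    using assms(1) unfolding canonical_form_def by auto
  have minimal: "\<sigma>' = \<sigma> \<and> \<tau>' = \<tau>" if sub: "\<sigma>' \<subseteq> \<sigma>" "\<tau>' \<subseteq> \<tau>" and rf: "rf_relation C \<sigma>' \<tau>'" for \<sigma>' \<tau>'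
  proof -
    have st': "\<sigma>' \<subseteq> {1..n}" "\<tau>' \<subseteq> {1..n}" "\<sigma>' \<inter> \<tau>' = {}"
      using sub st by auto
    have fin: "finite \<sigma>" "finite \<tau>" "finite \<sigma>'" "finite \<tau>'"
      using st st' finite_subset by blast+
    have "pm \<sigma>' \<tau>' = f"
    proof (rule fmin)
      show "is_pseudo_monomial n (pm \<sigma>' \<tau>')"
        unfolding is_pseudo_monomial_def using st' by blast
      show "pm \<sigma>' \<tau>' \<in> neural_ideal n C"
        using pm_in_neural_ideal_iff [OF assms(2) st'] rf by blast
      have "f = pm \<sigma>' \<tau>' * pm (\<sigma> - \<sigma>') (\<tau> - \<tau>')"
        using sub fin st(4) pm_union [of \<sigma>' "\<sigma> - \<sigma>'" \<tau>' "\<tau> - \<tau>'"] by (simp add: Un_absorb1)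
      moreover have "poly_in n (pm (\<sigma> - \<sigma>') (\<tau> - \<tau>'))"
        using st by (intro poly_in_pm) auto
      ultimately show "pdvd n (pm \<sigma>' \<tau>') f"
        unfolding pdvd_def by blast
    qed
    with st(4) show ?thesis
      using pm_inject [OF fin(3,4,1,2) st'(3) st(3)] by simp
  qed
  have "rf_relation C \<sigma> \<tau>"
    using pm_in_neural_ideal_iff [OF assms(2) st(1-3)] fJ st(4) by simp
  with minimal show ?thesis
    by (intro that [OF st]) (simp add: minimal_rf_relation_def)
qed

section \<open>Minimal receptive-field relations of pierced codes\<close>

lemma rf_relation_del_neuron:
  assumes "i \<notin> \<sigma>" "i \<notin> \<tau>"
  shows "rf_relation (del_neuron C i) \<sigma> \<tau> \<longleftrightarrow> rf_relation C \<sigma> \<tau>"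
proof -
  have "\<sigma> \<subseteq> c - {i} \<longleftrightarrow> \<sigma> \<subseteq> c" "(c - {i}) \<inter> \<tau> = c \<inter> \<tau>" for c
    using assms by auto
  then show ?thesis
    by (simp add: rf_relation_def del_neuron_def)
qed

lemma minimal_rf_relation_del_neuron:
  assumes "i \<notin> \<sigma>" "i \<notin> \<tau>"
  shows "minimal_rf_relation (del_neuron C i) \<sigma> \<tau> \<longleftrightarrow> minimal_rf_relation C \<sigma> \<tau>"
proof -
  have "rf_relation (del_neuron C i) \<sigma>' \<tau>' \<longleftrightarrow> rf_relation C \<sigma>' \<tau>'" if "\<sigma>' \<subseteq> \<sigma>" "\<tau>' \<subseteq> \<tau>" for \<sigma>' \<tau>'
    using that assms by (intro rf_relation_del_neuron) auto
  then show ?thesis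
    by (simp add: minimal_rf_relation_def rf_relation_del_neuron [OF assms])
qed

lemma piercingE:
  assumes "piercing n C i k"
  obtains \<sigma>0 \<tau>0 where "\<sigma>0 \<subseteq> \<tau>0" "{c \<in> C. i \<in> c} = interval (insert i \<sigma>0) (insert i \<tau>0)"
proof -
  obtain \<sigma>0 \<tau>0 where "\<sigma>0 \<subseteq> \<tau>0" "C = del_neuron C i \<union> interval (\<sigma>0 \<union> {i}) (\<tau>0 \<union> {i})"
    using assms unfolding piercing_def by blast
  moreover have "i \<notin> d" if "d \<in> del_neuron C i" for d
    using that by (auto simp: del_neuron_def)
  ultimately have "{c \<in> C. i \<in> c} = interval (insert i \<sigma>0) (insert i \<tau>0)"
    by (auto simp: interval_def)
  with \<open>\<sigma>0 \<subseteq> \<tau>0\<close> show ?thesis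
    by (rule that)
qed

lemma piercing_diff_neuron_mem:
  assumes "piercing n C i k" "c \<in> C"
  shows "c - {i} \<in> C"
proof -
  let ?D = "del_neuron C i"
  obtain \<sigma>0 \<tau>0 where p: "\<sigma>0 \<subseteq> \<tau>0" "\<tau>0 \<subseteq> {1..n} - {i}" "interval \<sigma>0 \<tau>0 \<subseteq> ?D"
    "C = ?D \<union> interval (\<sigma>0 \<union> {i}) (\<tau>0 \<union> {i})"
    using assms(1) unfolding piercing_def by blast
  show ?thesis
  proof (cases "c \<in> ?D")
    case True
    then show ?thesis
      using p(4) by (auto simp: del_neuron_def)
  next
    case False
    then have "c - {i} \<in> interval \<sigma>0 \<tau>0"
      using assms(2) p(1,2,4) by (auto simp: interval_def)
    then show ?thesis
      using p(3,4) by blast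
  qed
qed

lemma minimal_rf_relation_piercing_notin_tau:
  assumes "piercing n C i k" "minimal_rf_relation C \<sigma> \<tau>" "\<sigma> \<inter> \<tau> = {}"
  shows "i \<notin> \<tau>"
proof
  assume "i \<in> \<tau>"
  then have "i \<notin> \<sigma>"
    using assms(3) by blast
  have "rf_relation C \<sigma> (\<tau> - {i})"
    unfolding rf_relation_def
  proof (intro ballI notI)
    fix c assume "c \<in> C" "\<sigma> \<subseteq> c \<and> c \<inter> (\<tau> - {i}) = {}"
    then have "c - {i} \<in> C" "\<sigma> \<subseteq> c - {i} \<and> (c - {i}) \<inter> \<tau> = {}"
      using piercing_diff_neuron_mem [OF assms(1)] \<open>i \<notin> \<sigma>\<close> by auto
    then show False
      using minimal_rf_relationD(1) [OF assms(2)] unfolding rf_relation_def by blast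
  qed
  then have "\<tau> - {i} = \<tau>"
    using minimal_rf_relationD(2) [OF assms(2)] by blast
  then show False
    using \<open>i \<in> \<tau>\<close> by blast
qed

lemma minimal_rf_relation_piercing_in_sigma:
  assumes "piercing n C i k" "minimal_rf_relation C \<sigma> \<tau>" "\<sigma> \<inter> \<tau> = {}" "i \<in> \<sigma>"
  shows "card \<sigma> + card \<tau> = 2"
proof -
  obtain \<sigma>0 \<tau>0 where "\<sigma>0 \<subseteq> \<tau>0" and Ci: "{c \<in> C. i \<in> c} = interval (insert i \<sigma>0) (insert i \<tau>0)"
    using piercingE [OF assms(1)] by blast
  have Ci_bounds: "\<sigma>0 \<subseteq> c \<and> c \<subseteq> insert i \<tau>0" if "c \<in> C" "i \<in> c" for c
    using that Ci unfolding interval_def by blast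
  note minimal = minimal_rf_relationD(2) [OF assms(2)]
  consider a where "a \<in> \<sigma>" "a \<noteq> i" "a \<notin> \<tau>0" | b where "b \<in> \<sigma>0" "b \<in> \<tau>"
    | "\<sigma> \<subseteq> insert i \<tau>0" "\<sigma>0 \<inter> \<tau> = {}"
    by blast
  then show ?thesis
  proof cases
    case (1 a)
    have "rf_relation C {i, a} {}"
      using Ci_bounds 1 unfolding rf_relation_def by blast
    then have "\<sigma> = {i, a} \<and> \<tau> = {}"
      using minimal [of "{i, a}" "{}"] assms(4) 1 by blast
    then show ?thesis
      using 1 by simp
  next
    case (2 b)
    have "rf_relation C {i} {b}"
      using Ci_bounds 2 unfolding rf_relation_def by blast
    then have "\<sigma> = {i} \<and> \<tau> = {b}"
      using minimal [of "{i}" "{b}"] assms(4) 2 by blast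
    then show ?thesis
      by simp
  next
    case 3
    have "insert i (\<sigma>0 \<union> \<sigma>) \<in> interval (insert i \<sigma>0) (insert i \<tau>0)"
      using 3 \<open>\<sigma>0 \<subseteq> \<tau>0\<close> unfolding interval_def by blast
    then have "insert i (\<sigma>0 \<union> \<sigma>) \<in> C"
      using Ci by blast
    moreover have "\<sigma> \<subseteq> insert i (\<sigma>0 \<union> \<sigma>)" "insert i (\<sigma>0 \<union> \<sigma>) \<inter> \<tau> = {}"
      using 3 assms(3,4) by auto
    ultimately show ?thesis
      using minimal_rf_relationD(1) [OF assms(2)] unfolding rf_relation_def by blast
  qed
qed

lemma minimal_rf_relation_card_le_2:
  assumes "k_ind_pierced n k C" "minimal_rf_relation C \<sigma> \<tau>" "\<sigma> \<inter> \<tau> = {}"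
  shows "card \<sigma> + card \<tau> \<le> 2"
  using assms
proof (induction arbitrary: \<sigma> \<tau> rule: k_ind_pierced.induct)
  case base
  then obtain i where "i \<in> \<sigma>"
    using minimal_rf_relationD(1) by (fastforce simp: rf_relation_def)
  moreover have "rf_relation {{}} {i} {}"
    by (simp add: rf_relation_def)
  ultimately have "\<sigma> = {i} \<and> \<tau> = {}"
    using minimal_rf_relationD(2) [OF base.prems(1), of "{i}" "{}"] by blast
  then show ?case
    by simp
next
  case (step C i k')
  have "i \<notin> \<tau>"
    using minimal_rf_relation_piercing_notin_tau [OF step.hyps(1) step.prems] .
  show ?case
  proof (cases "i \<in> \<sigma>")
    case True
    then show ?thesis
      using minimal_rf_relation_piercing_in_sigma [OF step.hyps(1) step.prems] by simp
  next
    case False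
    then show ?thesis
      using step.IH step.prems minimal_rf_relation_del_neuron [OF False \<open>i \<notin> \<tau>\<close>] by blast
  qed
qed

lemma rf_relation_card_ge_2:
  assumes "is_code n C" "rf_relation C \<sigma> \<tau>" "\<sigma> \<subseteq> {1..n}" "finite \<tau>"
  shows "2 \<le> card \<sigma> + card \<tau>"
proof (rule ccontr)
  assume "\<not> ?thesis"
  moreover have "finite \<sigma>"
    using assms(3) finite_subset by blast
  moreover have "\<sigma> \<noteq> {}"
    using assms(1,2) by (auto simp: is_code_def rf_relation_def)
  ultimately have "card \<sigma> = 1" "card \<tau> = 0"
    using card_gt_0_iff [of \<sigma>] by linarith+
  then obtain i where "\<sigma> = {i}" "\<tau> = {}"
    using assms(4) by (metis card_0_eq card_1_singletonE)
  then show False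
    using assms by (auto simp: is_code_def rf_relation_def)
qed

theorem proposition1p4:
  fixes n :: nat and C :: "nat set set"
  assumes "is_code n C"
    and "ind_pierced n C"
  shows "\<forall>f\<in>canonical_form n C. tdeg f = 2"
proof
  fix f assume "f \<in> canonical_form n C"
  moreover have "\<forall>c\<in>C. c \<subseteq> {1..n}"
    using assms(1) by (simp add: is_code_def)
  ultimately obtain \<sigma> \<tau> where st: "\<sigma> \<subseteq> {1..n}" "\<tau> \<subseteq> {1..n}" "\<sigma> \<inter> \<tau> = {}" "f = pm \<sigma> \<tau>"
    and minimal: "minimal_rf_relation C \<sigma> \<tau>"
    by (elim canonical_form_minimal_rf_relation)
  have fin: "finite \<sigma>" "finite \<tau>"
    using st(1,2) finite_subset by blast+
  obtain k where "k_ind_pierced n k C"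
    using assms(2) unfolding ind_pierced_def by blast
  then have "card \<sigma> + card \<tau> \<le> 2"
    using minimal st(3) by (rule minimal_rf_relation_card_le_2)
  moreover have "2 \<le> card \<sigma> + card \<tau>"
    using rf_relation_card_ge_2 [OF assms(1) minimal_rf_relationD(1) [OF minimal] st(1) fin(2)] .
  ultimately show "tdeg f = 2"
    using tdeg_pm [OF fin st(3)] st(4) by simp
qed

end
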